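(* Let $k$ be an infinite field of characteristic $0$, $X_1\subseteq X_2$, $Y_1\subseteq Y_2$ finite sets, $W_i=W(X_i,Y_i)=(L(X_i),A(X_i)Y_i)$ ($i=1,2$), and $H$ a representation. If $(T_1,T_2)$ with $T_1\subseteq L(X_1)$, $T_2\subseteq A(X_1)Y_1$ is $H$-closed in $W_1$, then $(T_1,T_2)=(T_1,T_2)''_{W_2,H}\cap W_1$, i.e. if $(T_1,T_2)''_{W_2,H}=(S_1,S_2)$ then $T_1=S_1\cap L(X_1)$ and $T_2=S_2\cap A(X_1)Y_1$.
   Context: A representation $H=(L,V)$ is a Lie algebra $L$ over $k$ with an $L$-module $V$; homomorphisms $(\varphi,\psi)$: Lie homomorphism $\varphi$, linear $\psi$, $\varphi(l)\circ\psi(v)=\psi(l\circ v)$. $L(X)$ free Lie algebra, $A(X)$ free associative algebra with unit, $A(X)Y$ free $A(X)$-module with basis $Y$; $W_1\subseteq W_2$ naturally. For $W=W(X,Y)$ and $S_1\subseteq L(X)$, $S_2\subseteq A(X)Y$: $(S_1,S_2)'_{W,H}$ is the set of homomorphisms $(\varphi,\psi):W\to H$ with $S_1\subseteq\ker\varphi$, $S_2\subseteq\ker\psi$, $(S_1,S_2)''_{W,H}$ is the pair (intersection of these $\ker\varphi$, intersection of these $\ker\psi$), and $(S_1,S_2)$ is $H$-closed in $W$ if $(S_1,S_2)''_{W,H}=(S_1,S_2)$. *)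

theory Defs
  imports Main "HOL.Vector_Spaces"
begin

text \<open>Free associative algebra A(X) with unit over k, realised as finitely supported
  functions on words over X (noncommutative polynomials); product = concatenation product.\<close>

definition amul :: "('x list \<Rightarrow> 'k::comm_ring) \<Rightarrow> ('x list \<Rightarrow> 'k) \<Rightarrow> 'x list \<Rightarrow> 'k" where
  "amul f g = (\<lambda>w. \<Sum>i\<le>length w. f (take i w) * g (drop i w))"

definition acomm :: "('x list \<Rightarrow> 'k::comm_ring) \<Rightarrow> ('x list \<Rightarrow> 'k) \<Rightarrow> 'x list \<Rightarrow> 'k" where
  "acomm f g = (\<lambda>w. amul f g w - amul g f w)"

definition agen :: "'x \<Rightarrow> 'x list \<Rightarrow> 'k::{zero,one}" where
  "agen x = (\<lambda>w. if w = [x] then 1 else 0)"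

definition free_assoc :: "'x set \<Rightarrow> ('x list \<Rightarrow> 'k::zero) set" where
  "free_assoc X = {f. finite {w. f w \<noteq> 0} \<and> (\<forall>w. f w \<noteq> 0 \<longrightarrow> set w \<subseteq> X)}"

text \<open>Free Lie algebra L(X), realised (canonically) as the Lie subalgebra of A(X)
  generated by X under the commutator bracket.\<close>

inductive_set free_lie :: "'x set \<Rightarrow> ('x list \<Rightarrow> 'k::comm_ring_1) set" for X where
  gen: "x \<in> X \<Longrightarrow> agen x \<in> free_lie X"
| zero: "(\<lambda>w. 0) \<in> free_lie X"
| add: "f \<in> free_lie X \<Longrightarrow> g \<in> free_lie X \<Longrightarrow> (\<lambda>w. f w + g w) \<in> free_lie X"
| smult: "f \<in> free_lie X \<Longrightarrow> (\<lambda>w. c * f w) \<in> free_lie X"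
| bracket: "f \<in> free_lie X \<Longrightarrow> g \<in> free_lie X \<Longrightarrow> acomm f g \<in> free_lie X"

text \<open>Free A(X)-module A(X)Y with basis Y: finitely supported functions on pairs (word, basis element).\<close>

definition free_module :: "'x set \<Rightarrow> 'y set \<Rightarrow> ('x list \<times> 'y \<Rightarrow> 'k::zero) set" where
  "free_module X Y = {m. finite {p. m p \<noteq> 0} \<and>
     (\<forall>w y. m (w, y) \<noteq> 0 \<longrightarrow> set w \<subseteq> X \<and> y \<in> Y)}"

definition amod :: "('x list \<Rightarrow> 'k::comm_ring) \<Rightarrow> ('x list \<times> 'y \<Rightarrow> 'k) \<Rightarrow> 'x list \<times> 'y \<Rightarrow> 'k" where
  "amod f m = (\<lambda>(w, y). \<Sum>i\<le>length w. f (take i w) * m (drop i w, y))"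

definition vspace :: "('k::field \<Rightarrow> 'a::ab_group_add \<Rightarrow> 'a) \<Rightarrow> bool" where
  "vspace s \<longleftrightarrow> vector_space s"

definition lie_rep :: "('k::field \<Rightarrow> 'l::ab_group_add \<Rightarrow> 'l) \<Rightarrow> ('l \<Rightarrow> 'l \<Rightarrow> 'l)
    \<Rightarrow> ('k \<Rightarrow> 'v::ab_group_add \<Rightarrow> 'v) \<Rightarrow> ('l \<Rightarrow> 'v \<Rightarrow> 'v) \<Rightarrow> bool" where
  "lie_rep sL br sV act \<longleftrightarrow>
     vspace sL \<and> vspace sV \<and>
     (\<forall>a b c. br (a + b) c = br a c + br b c) \<and>
     (\<forall>a b c. br a (b + c) = br a b + br a c) \<and>
     (\<forall>r a b. br (sL r a) b = sL r (br a b)) \<and>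
     (\<forall>r a b. br a (sL r b) = sL r (br a b)) \<and>
     (\<forall>a. br a a = 0) \<and>
     (\<forall>a b c. br a (br b c) + br b (br c a) + br c (br a b) = 0) \<and>
     (\<forall>a b v. act (a + b) v = act a v + act b v) \<and>
     (\<forall>a v u. act a (v + u) = act a v + act a u) \<and>
     (\<forall>r a v. act (sL r a) v = sV r (act a v)) \<and>
     (\<forall>r a v. act a (sV r v) = sV r (act a v)) \<and>
     (\<forall>a b v. act (br a b) v = act a (act b v) - act b (act a v))"

text \<open>Homomorphisms (phi, psi) : W(X,Y) \<rightarrow> H (conditions imposed on the carriers only).\<close>

definition rep_hom :: "'x set \<Rightarrow> 'y set \<Rightarrow> ('k::field \<Rightarrow> 'l::ab_group_add \<Rightarrow> 'l) \<Rightarrow> ('l \<Rightarrow> 'l \<Rightarrow> 'l)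
    \<Rightarrow> ('k \<Rightarrow> 'v::ab_group_add \<Rightarrow> 'v) \<Rightarrow> ('l \<Rightarrow> 'v \<Rightarrow> 'v)
    \<Rightarrow> (('x list \<Rightarrow> 'k) \<Rightarrow> 'l) \<Rightarrow> (('x list \<times> 'y \<Rightarrow> 'k) \<Rightarrow> 'v) \<Rightarrow> bool" where
  "rep_hom X Y sL br sV act \<phi> \<psi> \<longleftrightarrow>
     (\<forall>a\<in>free_lie X. \<forall>b\<in>free_lie X.
        \<phi> (\<lambda>w. a w + b w) = \<phi> a + \<phi> b \<and> \<phi> (acomm a b) = br (\<phi> a) (\<phi> b)) \<and>
     (\<forall>r. \<forall>a\<in>free_lie X. \<phi> (\<lambda>w. r * a w) = sL r (\<phi> a)) \<and>
     (\<forall>m\<in>free_module X Y. \<forall>n\<in>free_module X Y. \<psi> (\<lambda>p. m p + n p) = \<psi> m + \<psi> n) \<and>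
     (\<forall>r. \<forall>m\<in>free_module X Y. \<psi> (\<lambda>p. r * m p) = sV r (\<psi> m)) \<and>
     (\<forall>l\<in>free_lie X. \<forall>m\<in>free_module X Y. act (\<phi> l) (\<psi> m) = \<psi> (amod l m))"

text \<open>The H-closure (S1,S2)''_{W(X,Y),H}: intersections of the kernels of all
  homomorphisms in (S1,S2)'_{W,H}.\<close>

definition hclosure :: "'x set \<Rightarrow> 'y set \<Rightarrow> ('k::field \<Rightarrow> 'l::ab_group_add \<Rightarrow> 'l) \<Rightarrow> ('l \<Rightarrow> 'l \<Rightarrow> 'l)
    \<Rightarrow> ('k \<Rightarrow> 'v::ab_group_add \<Rightarrow> 'v) \<Rightarrow> ('l \<Rightarrow> 'v \<Rightarrow> 'v)
    \<Rightarrow> ('x list \<Rightarrow> 'k) set \<Rightarrow> ('x list \<times> 'y \<Rightarrow> 'k) set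
    \<Rightarrow> ('x list \<Rightarrow> 'k) set \<times> ('x list \<times> 'y \<Rightarrow> 'k) set" where
  "hclosure X Y sL br sV act S1 S2 =
    ({a \<in> free_lie X. \<forall>\<phi> \<psi>. rep_hom X Y sL br sV act \<phi> \<psi> \<and>
        S1 \<subseteq> {b \<in> free_lie X. \<phi> b = 0} \<and> S2 \<subseteq> {m \<in> free_module X Y. \<psi> m = 0} \<longrightarrow> \<phi> a = 0},
     {n \<in> free_module X Y. \<forall>\<phi> \<psi>. rep_hom X Y sL br sV act \<phi> \<psi> \<and>
        S1 \<subseteq> {b \<in> free_lie X. \<phi> b = 0} \<and> S2 \<subseteq> {m \<in> free_module X Y. \<psi> m = 0} \<longrightarrow> \<psi> n = 0})"

end

theory Submission
  imports Defs
begin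

text \<open>Killing every word that leaves X1 (and every basis element outside Y1) is a
  retraction of W(X2,Y2) onto W(X1,Y1) compatible with all the structure. Composing a
  homomorphism W(X1,Y1) \<rightarrow> H with it gives a homomorphism W(X2,Y2) \<rightarrow> H with the same
  values on W(X1,Y1); conversely every homomorphism on W(X2,Y2) restricts to W(X1,Y1).
  Hence the H-closure of (T1,T2) in W(X2,Y2), cut down to W(X1,Y1), is its H-closure in
  W(X1,Y1), which is (T1,T2) by assumption.\<close>

definition restrict_alg :: "'x set \<Rightarrow> ('x list \<Rightarrow> 'k::zero) \<Rightarrow> 'x list \<Rightarrow> 'k" where
  "restrict_alg X f = (\<lambda>w. if set w \<subseteq> X then f w else 0)"

definition restrict_mod :: "'x set \<Rightarrow> 'y set \<Rightarrow> ('x list \<times> 'y \<Rightarrow> 'k::zero) \<Rightarrow> 'x list \<times> 'y \<Rightarrow> 'k" where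
  "restrict_mod X Y m = (\<lambda>(w, y). if set w \<subseteq> X \<and> y \<in> Y then m (w, y) else 0)"

lemma set_subset_iff_take_drop: "set w \<subseteq> X \<longleftrightarrow> set (take i w) \<subseteq> X \<and> set (drop i w) \<subseteq> X"
  by (metis append_take_drop_id set_append Un_subset_iff)

lemma free_lie_support: "f \<in> free_lie X \<Longrightarrow> f w \<noteq> 0 \<Longrightarrow> set w \<subseteq> X"
proof (induction f arbitrary: w rule: free_lie.induct)
  case (gen x) then show ?case by (auto simp: agen_def split: if_splits)
next
  case zero then show ?case by simp
next
  case (add f g) then show ?case by (metis add.right_neutral)
next
  case (smult f c) then show ?case by (metis mult_zero_right)
next
  case (bracket f g)
  have "amul f g w \<noteq> 0 \<or> amul g f w \<noteq> 0" using bracket.prems by (auto simp: acomm_def)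
  then obtain i where "f (take i w) * g (drop i w) \<noteq> 0 \<or> g (take i w) * f (drop i w) \<noteq> 0"
    unfolding amul_def by (metis (no_types, lifting) sum.neutral)
  then show ?case
    using bracket.IH set_subset_iff_take_drop by (metis mult_zero_left mult_zero_right)
qed

lemma free_lie_mono: "f \<in> free_lie X \<Longrightarrow> X \<subseteq> X' \<Longrightarrow> f \<in> free_lie X'"
  by (induction f rule: free_lie.induct) (auto intro: free_lie.intros)

lemma free_module_mono: "m \<in> free_module X Y \<Longrightarrow> X \<subseteq> X' \<Longrightarrow> Y \<subseteq> Y' \<Longrightarrow> m \<in> free_module X' Y'"
  unfolding free_module_def by blast

lemma restrict_alg_free_lie: "f \<in> free_lie X \<Longrightarrow> restrict_alg X f = f"
  unfolding restrict_alg_def using free_lie_support by fastforce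

lemma restrict_mod_free_module: "m \<in> free_module X Y \<Longrightarrow> restrict_mod X Y m = m"
  unfolding restrict_mod_def free_module_def by (force simp: fun_eq_iff)

lemma restrict_alg_amul: "restrict_alg X (amul f g) = amul (restrict_alg X f) (restrict_alg X g)"
proof
  fix w
  show "restrict_alg X (amul f g) w = amul (restrict_alg X f) (restrict_alg X g) w"
  proof (cases "set w \<subseteq> X")
    case True
    then show ?thesis
      using set_subset_iff_take_drop[of w X] by (simp add: restrict_alg_def amul_def)
  next
    case False
    then have "restrict_alg X f (take i w) * restrict_alg X g (drop i w) = 0" for i
      using set_subset_iff_take_drop[of w X i] by (auto simp: restrict_alg_def)
    then show ?thesis using False by (simp add: restrict_alg_def amul_def)
  qed
qed

lemma restrict_alg_acomm: "restrict_alg X (acomm f g) = acomm (restrict_alg X f) (restrict_alg X g)"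
  by (simp add: acomm_def restrict_alg_amul[symmetric]) (auto simp: restrict_alg_def fun_eq_iff)

lemma restrict_mod_amod: "restrict_mod X Y (amod l m) = amod (restrict_alg X l) (restrict_mod X Y m)"
proof (rule ext, clarify)
  fix w y
  show "restrict_mod X Y (amod l m) (w, y) = amod (restrict_alg X l) (restrict_mod X Y m) (w, y)"
  proof (cases "set w \<subseteq> X \<and> y \<in> Y")
    case True
    then show ?thesis using set_subset_iff_take_drop[of w X]
      unfolding restrict_alg_def restrict_mod_def amod_def by force
  next
    case False
    then have "restrict_alg X l (take i w) * restrict_mod X Y m (drop i w, y) = 0" for i
      using set_subset_iff_take_drop[of w X i] by (auto simp: restrict_alg_def restrict_mod_def)
    then show ?thesis using False by (auto simp add: restrict_mod_def amod_def)
  qed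
qed

lemma restrict_alg_in_free_lie:
  fixes f :: "'x list \<Rightarrow> 'k::comm_ring_1"
  shows "f \<in> free_lie X' \<Longrightarrow> restrict_alg X f \<in> free_lie X"
proof (induction f rule: free_lie.induct)
  case (gen x)
  show ?case
  proof (cases "x \<in> X")
    case True
    then have "restrict_alg X (agen x) = (agen x :: 'x list \<Rightarrow> 'k)"
      by (auto simp: restrict_alg_def agen_def fun_eq_iff)
    then show ?thesis using True by (metis free_lie.gen)
  next
    case False
    then have "restrict_alg X (agen x) = (\<lambda>w. 0 :: 'k)"
      by (auto simp: restrict_alg_def agen_def fun_eq_iff)
    then show ?thesis using free_lie.zero[of X] by simp
  qed
next
  case zero
  have "restrict_alg X (\<lambda>w. 0) = (\<lambda>w. 0 :: 'k)" by (simp add: restrict_alg_def fun_eq_iff)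
  then show ?case using free_lie.zero[of X] by simp
next
  case (add f g)
  have "restrict_alg X (\<lambda>w. f w + g w) = (\<lambda>w. restrict_alg X f w + restrict_alg X g w)"
    by (simp add: restrict_alg_def fun_eq_iff)
  then show ?case using add by (simp add: free_lie.add)
next
  case (smult f c)
  have "restrict_alg X (\<lambda>w. c * f w) = (\<lambda>w. c * restrict_alg X f w)"
    by (simp add: restrict_alg_def fun_eq_iff)
  then show ?case using smult by (simp add: free_lie.smult)
next
  case (bracket f g)
  then show ?case by (simp add: restrict_alg_acomm free_lie.bracket)
qed

lemma restrict_mod_in_free_module: "m \<in> free_module X' Y' \<Longrightarrow> restrict_mod X Y m \<in> free_module X Y"
proof -
  assume m: "m \<in> free_module X' Y'"
  have "{p. restrict_mod X Y m p \<noteq> 0} \<subseteq> {p. m p \<noteq> 0}"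
    by (auto simp: restrict_mod_def split: if_splits)
  then have "finite {p. restrict_mod X Y m p \<noteq> 0}"
    using m unfolding free_module_def by (auto intro: finite_subset)
  then show ?thesis unfolding free_module_def by (auto simp: restrict_mod_def split: if_splits)
qed

lemma rep_hom_restrict:
  fixes \<phi> :: "('x list \<Rightarrow> 'k::field) \<Rightarrow> 'l::ab_group_add"
    and \<psi> :: "('x list \<times> 'y \<Rightarrow> 'k) \<Rightarrow> 'v::ab_group_add"
  assumes "rep_hom X Y sL br sV act \<phi> \<psi>"
  shows "rep_hom X' Y' sL br sV act (\<lambda>a. \<phi> (restrict_alg X a)) (\<lambda>m. \<psi> (restrict_mod X Y m))"
proof -
  have linear:
    "\<And>a b :: 'x list \<Rightarrow> 'k. restrict_alg X (\<lambda>w. a w + b w) = (\<lambda>w. restrict_alg X a w + restrict_alg X b w)"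
    "\<And>(r::'k) a. restrict_alg X (\<lambda>w. r * a w) = (\<lambda>w. r * restrict_alg X a w)"
    "\<And>m n :: 'x list \<times> 'y \<Rightarrow> 'k. restrict_mod X Y (\<lambda>p. m p + n p) = (\<lambda>p. restrict_mod X Y m p + restrict_mod X Y n p)"
    "\<And>(r::'k) m. restrict_mod X Y (\<lambda>p. r * m p) = (\<lambda>p. r * restrict_mod X Y m p)"
    by (auto simp: restrict_alg_def restrict_mod_def fun_eq_iff split: prod.splits)
  show ?thesis using assms unfolding rep_hom_def
    by (simp add: linear restrict_alg_acomm restrict_mod_amod
        restrict_alg_in_free_lie restrict_mod_in_free_module)
qed

lemma rep_hom_mono:
  assumes "rep_hom X' Y' sL br sV act \<phi> \<psi>" "X \<subseteq> X'" "Y \<subseteq> Y'"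
  shows "rep_hom X Y sL br sV act \<phi> \<psi>"
  using assms free_lie_mono free_module_mono unfolding rep_hom_def by meson

lemma hclosure_inter_free:
  fixes sL :: "'k::field \<Rightarrow> 'l::ab_group_add \<Rightarrow> 'l" and sV :: "'k \<Rightarrow> 'v::ab_group_add \<Rightarrow> 'v"
    and T1 :: "('x list \<Rightarrow> 'k) set" and T2 :: "('x list \<times> 'y \<Rightarrow> 'k) set"
  assumes "X \<subseteq> X'" "Y \<subseteq> Y'" "T1 \<subseteq> free_lie X" "T2 \<subseteq> free_module X Y"
  shows "fst (hclosure X' Y' sL br sV act T1 T2) \<inter> free_lie X = fst (hclosure X Y sL br sV act T1 T2)"
    and "snd (hclosure X' Y' sL br sV act T1 T2) \<inter> free_module X Y = snd (hclosure X Y sL br sV act T1 T2)"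
proof -
  have T1': "T1 \<subseteq> free_lie X'" and T2': "T2 \<subseteq> free_module X' Y'"
    using assms free_lie_mono free_module_mono by blast+
  let ?ann = "\<lambda>X Y \<phi> \<psi>. rep_hom X Y sL br sV act \<phi> \<psi> \<and>
      T1 \<subseteq> {b \<in> free_lie X. \<phi> b = 0} \<and> T2 \<subseteq> {m \<in> free_module X Y. \<psi> m = 0}"
  have extend: "?ann X' Y' (\<lambda>a. \<phi> (restrict_alg X a)) (\<lambda>m. \<psi> (restrict_mod X Y m))"
    if ann: "?ann X Y \<phi> \<psi>" for \<phi> \<psi>
  proof (intro conjI subsetI CollectI)
    show "rep_hom X' Y' sL br sV act (\<lambda>a. \<phi> (restrict_alg X a)) (\<lambda>m. \<psi> (restrict_mod X Y m))"
      using ann rep_hom_restrict by blast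
  next
    fix b assume "b \<in> T1"
    then show "b \<in> free_lie X'" using T1' by blast
    from \<open>b \<in> T1\<close> assms(3) have "restrict_alg X b = b" by (auto intro: restrict_alg_free_lie)
    with \<open>b \<in> T1\<close> ann show "\<phi> (restrict_alg X b) = 0" by auto
  next
    fix m assume "m \<in> T2"
    then show "m \<in> free_module X' Y'" using T2' by blast
    from \<open>m \<in> T2\<close> assms(4) have "restrict_mod X Y m = m" by (auto intro: restrict_mod_free_module)
    with \<open>m \<in> T2\<close> ann show "\<psi> (restrict_mod X Y m) = 0" by auto
  qed
  have restrict: "?ann X Y \<phi> \<psi>" if "?ann X' Y' \<phi> \<psi>" for \<phi> \<psi>
    using that rep_hom_mono[OF _ assms(1,2)] assms(3,4) by blast
  show "fst (hclosure X' Y' sL br sV act T1 T2) \<inter> free_lie X = fst (hclosure X Y sL br sV act T1 T2)"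
  proof (intro equalityI subsetI)
    fix a assume a: "a \<in> fst (hclosure X' Y' sL br sV act T1 T2) \<inter> free_lie X"
    then have "a \<in> free_lie X" by simp
    have killed: "\<phi> a = 0" if "?ann X' Y' \<phi> \<psi>" for \<phi> \<psi>
      using a that unfolding hclosure_def by auto
    have "\<phi> a = 0" if "?ann X Y \<phi> \<psi>" for \<phi> \<psi>
      using killed[OF extend[OF that]] restrict_alg_free_lie[OF \<open>a \<in> free_lie X\<close>] by simp
    with \<open>a \<in> free_lie X\<close> show "a \<in> fst (hclosure X Y sL br sV act T1 T2)"
      unfolding hclosure_def fst_conv by blast
  next
    fix a assume "a \<in> fst (hclosure X Y sL br sV act T1 T2)"
    then show "a \<in> fst (hclosure X' Y' sL br sV act T1 T2) \<inter> free_lie X"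
      using restrict free_lie_mono[OF _ assms(1)] unfolding hclosure_def fst_conv by blast
  qed
  show "snd (hclosure X' Y' sL br sV act T1 T2) \<inter> free_module X Y = snd (hclosure X Y sL br sV act T1 T2)"
  proof (intro equalityI subsetI)
    fix m assume m: "m \<in> snd (hclosure X' Y' sL br sV act T1 T2) \<inter> free_module X Y"
    then have "m \<in> free_module X Y" by simp
    have killed: "\<psi> m = 0" if "?ann X' Y' \<phi> \<psi>" for \<phi> \<psi>
      using m that unfolding hclosure_def by auto
    have "\<psi> m = 0" if "?ann X Y \<phi> \<psi>" for \<phi> \<psi>
      using killed[OF extend[OF that]] restrict_mod_free_module[OF \<open>m \<in> free_module X Y\<close>] by simp
    with \<open>m \<in> free_module X Y\<close> show "m \<in> snd (hclosure X Y sL br sV act T1 T2)"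
      unfolding hclosure_def snd_conv by blast
  next
    fix m assume "m \<in> snd (hclosure X Y sL br sV act T1 T2)"
    then show "m \<in> snd (hclosure X' Y' sL br sV act T1 T2) \<inter> free_module X Y"
      using restrict free_module_mono[OF _ assms(1,2)] unfolding hclosure_def snd_conv by blast
  qed
qed

theorem proposition3:
  fixes X1 X2 :: "'x set" and Y1 Y2 :: "'y set"
    and sL :: "'k::field_char_0 \<Rightarrow> 'l::ab_group_add \<Rightarrow> 'l" and br :: "'l \<Rightarrow> 'l \<Rightarrow> 'l"
    and sV :: "'k \<Rightarrow> 'v::ab_group_add \<Rightarrow> 'v" and act :: "'l \<Rightarrow> 'v \<Rightarrow> 'v"
    and T1 :: "('x list \<Rightarrow> 'k) set" and T2 :: "('x list \<times> 'y \<Rightarrow> 'k) set"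
  assumes "infinite (UNIV :: 'k set)"
    and "finite X1" "finite X2" "finite Y1" "finite Y2" "X1 \<subseteq> X2" "Y1 \<subseteq> Y2"
    and "lie_rep sL br sV act"
    and "T1 \<subseteq> free_lie X1" "T2 \<subseteq> free_module X1 Y1"
    and "hclosure X1 Y1 sL br sV act T1 T2 = (T1, T2)"
  shows "T1 = fst (hclosure X2 Y2 sL br sV act T1 T2) \<inter> free_lie X1 \<and>
         T2 = snd (hclosure X2 Y2 sL br sV act T1 T2) \<inter> free_module X1 Y1"
  using hclosure_inter_free[OF assms(6,7,9,10), of sL br sV act] assms(11) by simp

end
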